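(* Let $C$ be a copula and $\hat C(u,v)=u+v-1+C(1-u,1-v)$ its survival copula. Then for all $p,q\in[0,1]$, $$\lambda^{\hat C}(q|p)=\lambda^C(1-q|1-p),$$ in the sense that one side exists if and only if the other does, and then they are equal.
   Context: For a copula $C$ (bivariate distribution function on $[0,1]^2$ with uniform margins) and $p,q\in[0,1]$, the $(p,q)$-quantile dependence coefficient is $\lambda^C(q|p)=\lim_{t\to0^+}\frac{V_C([(p-t)^+,(p+t)^-]\times[(q-t)^+,(q+t)^-])}{(p+t)^- - (p-t)^+}$ when the limit exists, where $a^+=\max(a,0)$, $a^-=1-(1-a)^+$, and $V_C([u_1,u_2]\times[v_1,v_2])=C(u_2,v_2)-C(u_2,v_1)-C(u_1,v_2)+C(u_1,v_1)$. *)

theory Defs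
  imports "HOL-Analysis.Analysis"
begin

definition copula :: "(real \<Rightarrow> real \<Rightarrow> real) \<Rightarrow> bool" where
  "copula C \<longleftrightarrow>
     (\<forall>u\<in>{0..1}. C u 0 = 0 \<and> C 0 u = 0 \<and> C u 1 = u \<and> C 1 u = u) \<and>
     (\<forall>u1 u2 v1 v2. 0 \<le> u1 \<and> u1 \<le> u2 \<and> u2 \<le> 1 \<and> 0 \<le> v1 \<and> v1 \<le> v2 \<and> v2 \<le> 1 \<longrightarrow>
        C u2 v2 - C u2 v1 - C u1 v2 + C u1 v1 \<ge> 0)"

definition Cvol :: "(real \<Rightarrow> real \<Rightarrow> real) \<Rightarrow> real \<Rightarrow> real \<Rightarrow> real \<Rightarrow> real \<Rightarrow> real" where
  "Cvol C u1 u2 v1 v2 = C u2 v2 - C u2 v1 - C u1 v2 + C u1 v1"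

definition pos_part :: "real \<Rightarrow> real" where
  "pos_part a = max a 0"

definition neg_part :: "real \<Rightarrow> real" where
  "neg_part a = 1 - pos_part (1 - a)"

definition qdc_quot :: "(real \<Rightarrow> real \<Rightarrow> real) \<Rightarrow> real \<Rightarrow> real \<Rightarrow> real \<Rightarrow> real" where
  "qdc_quot C p q t =
     Cvol C (pos_part (p - t)) (neg_part (p + t)) (pos_part (q - t)) (neg_part (q + t))
       / (neg_part (p + t) - pos_part (p - t))"

text \<open>lambda^C(q|p) exists and equals L.\<close>
definition qdc_has :: "(real \<Rightarrow> real \<Rightarrow> real) \<Rightarrow> real \<Rightarrow> real \<Rightarrow> real \<Rightarrow> bool" where
  "qdc_has C p q L \<longleftrightarrow> ((\<lambda>t. qdc_quot C p q t) \<longlongrightarrow> L) (at_right 0)"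

definition survival_copula :: "(real \<Rightarrow> real \<Rightarrow> real) \<Rightarrow> real \<Rightarrow> real \<Rightarrow> real" where
  "survival_copula C u v = u + v - 1 + C (1 - u) (1 - v)"

end

theory Submission
  imports Defs
begin

(* The reflection (u, v) -> (1 - u, 1 - v) carries the C-volume of a rectangle to the
   survival-copula volume of its mirror image, and it maps the truncated window
   [(p - t)^+, (p + t)^-] onto [(1 - p - t)^+, (1 - p + t)^-]. Hence the difference
   quotients defining the two coefficients coincide for every t, not only in the limit;
   no property of copulas is needed. *)

lemma one_minus_neg_part: "1 - neg_part a = pos_part (1 - a)"
  by (simp add: neg_part_def)

lemma one_minus_pos_part: "1 - pos_part a = neg_part (1 - a)"
  by (simp add: neg_part_def)

lemma Cvol_survival_copula:
  "Cvol (survival_copula C) u1 u2 v1 v2 = Cvol C (1 - u2) (1 - u1) (1 - v2) (1 - v1)"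
  by (simp add: Cvol_def survival_copula_def algebra_simps)

lemma qdc_quot_survival_copula:
  "qdc_quot (survival_copula C) p q t = qdc_quot C (1 - p) (1 - q) t"
proof -
  have lower: "1 - neg_part (x + t) = pos_part ((1 - x) - t)" for x
    using one_minus_neg_part[of "x + t"] by (simp add: algebra_simps)
  have upper: "1 - pos_part (x - t) = neg_part ((1 - x) + t)" for x
    using one_minus_pos_part[of "x - t"] by (simp add: algebra_simps)
  have width: "neg_part (x + t) - pos_part (x - t)
      = neg_part ((1 - x) + t) - pos_part ((1 - x) - t)" for x
    using lower[of x] upper[of x] by linarith
  show ?thesis
    unfolding qdc_quot_def Cvol_survival_copula lower upper width[of p] ..
qed

lemma qdc_has_survival_copula:
  "qdc_has (survival_copula C) p q L \<longleftrightarrow> qdc_has C (1 - p) (1 - q) L"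
  unfolding qdc_has_def qdc_quot_survival_copula ..

theorem proposition5:
  fixes C :: "real \<Rightarrow> real \<Rightarrow> real" and p q :: real
  assumes "copula C" and "p \<in> {0..1}" and "q \<in> {0..1}"
  shows "\<forall>L. qdc_has (survival_copula C) p q L \<longleftrightarrow> qdc_has C (1 - p) (1 - q) L"
  using qdc_has_survival_copula by blast

end
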